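(* The representation $\rho$ in the following setting is reducible if and only if $w\ne2$. Setting: $q$ a root of unity with $n$ even and $q^4\ne1$ ($N=n/2$); $k\in\mathbb Z$, $w=-q^{4k+2}-q^{-4k-2}$; $V$ has basis $\{u_i:-N\le i\le N-1\}$, $u_N:=0$; $\lambda_i=q^{2i}+q^{-2i}$, and for $i\ne-N,0$: $s_i=\frac{q^{2i-2k}-q^{-2i+2k}}{q^{2i}-q^{-2i}}$, $s'_i=\frac{q^{2i+2}-q^{-2i-2}}{q^{2i}-q^{-2i}}s_i$, $\beta_i=\frac{q^{2k}-q^{-2k}}{(q^{2i}-q^{-2i})^3}$; $\rho$ is the representation of $\mathcal S_q(\Sigma_{1,1})$ with $\rho(\alpha_0)u_i=\lambda_iu_i$ ($-N\le i\le0$), $\rho(\alpha_0)u_i=\lambda_iu_i+u_{-i}$ ($0<i<N$), $\rho(\alpha_\infty)u_{-N}=(q^{2k}+q^{-2k})u_{-N+1}+(q^2-q^{-2})(q^{2k}-q^{-2k})u_{N-1}$, $\rho(\alpha_\infty)u_i=s_iu_{i+1}+s_{-i}u_{i-1}$ ($-N<i<0$), $\rho(\alpha_\infty)u_0=(q^{2k}+q^{-2k})u_{-1}-(q^2-q^{-2})(q^{2k}-q^{-2k})u_1$, $\rho(\alpha_\infty)u_i=\beta_iu_{-i-1}-\beta_iu_{-i+1}+s'_{-i}u_{i-1}+s'_iu_{i+1}$ ($0<i<N$).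
   Context: $\mathcal S_q(\Sigma_{1,1})$ is the Kauffman bracket skein algebra of the one-punctured torus, generated by the slope $0,1,\infty$ curves $\alpha_0,\alpha_1,\alpha_\infty$; for $q^4\ne1$ a representation is determined by the images of $\alpha_0,\alpha_\infty$. For $q$ a root of unity, $n=\mathrm{ord}(q^2)$, $N=\mathrm{ord}(q^4)$. (The formulas above are known to define a representation.) *)

theory Defs
  imports Complex_Main
begin

text \<open>Vectors of V are coordinate functions int => complex supported on {-N..N-1};
  the basis vector u_i is the indicator of i (so u_N = 0 automatically).\<close>

definition qp :: "complex \<Rightarrow> int \<Rightarrow> complex" where
  "qp q m = q powi m"

definition ordq2 :: "complex \<Rightarrow> nat" where
  "ordq2 q = (LEAST m. m > 0 \<and> (q^2)^m = 1)"

definition Vsp :: "int \<Rightarrow> (int \<Rightarrow> complex) set" where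
  "Vsp N = {v. \<forall>j. (j < -N \<or> j \<ge> N) \<longrightarrow> v j = 0}"

definition ub :: "int \<Rightarrow> int \<Rightarrow> (int \<Rightarrow> complex)" where
  "ub N i = (\<lambda>j. if j = i \<and> -N \<le> i \<and> i \<le> N - 1 then 1 else 0)"

definition lam :: "complex \<Rightarrow> int \<Rightarrow> complex" where
  "lam q i = qp q (2*i) + qp q (-2*i)"

definition sc :: "complex \<Rightarrow> int \<Rightarrow> int \<Rightarrow> complex" where
  "sc q k i = (qp q (2*i - 2*k) - qp q (-2*i + 2*k)) / (qp q (2*i) - qp q (-2*i))"

definition sc' :: "complex \<Rightarrow> int \<Rightarrow> int \<Rightarrow> complex" where
  "sc' q k i = (qp q (2*i + 2) - qp q (-2*i - 2)) / (qp q (2*i) - qp q (-2*i)) * sc q k i"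

definition bet :: "complex \<Rightarrow> int \<Rightarrow> int \<Rightarrow> complex" where
  "bet q k i = (qp q (2*k) - qp q (-2*k)) / (qp q (2*i) - qp q (-2*i))^3"

definition rho0_u :: "complex \<Rightarrow> int \<Rightarrow> int \<Rightarrow> (int \<Rightarrow> complex)" where
  "rho0_u q N i =
     (if -N \<le> i \<and> i \<le> 0 then (\<lambda>j. lam q i * ub N i j)
      else (\<lambda>j. lam q i * ub N i j + ub N (-i) j))"

definition rhoInf_u :: "complex \<Rightarrow> int \<Rightarrow> int \<Rightarrow> int \<Rightarrow> (int \<Rightarrow> complex)" where
  "rhoInf_u q k N i =
     (if i = -N then (\<lambda>j. (qp q (2*k) + qp q (-2*k)) * ub N (-N+1) j
            + (qp q 2 - qp q (-2)) * (qp q (2*k) - qp q (-2*k)) * ub N (N - 1) j)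
      else if -N < i \<and> i < 0 then (\<lambda>j. sc q k i * ub N (i+1) j + sc q k (-i) * ub N (i - 1) j)
      else if i = 0 then (\<lambda>j. (qp q (2*k) + qp q (-2*k)) * ub N (-1) j
            - (qp q 2 - qp q (-2)) * (qp q (2*k) - qp q (-2*k)) * ub N 1 j)
      else (\<lambda>j. bet q k i * ub N (-i-1) j - bet q k i * ub N (-i+1) j
            + sc' q k (-i) * ub N (i - 1) j + sc' q k i * ub N (i+1) j))"

definition linext :: "int \<Rightarrow> (int \<Rightarrow> (int \<Rightarrow> complex)) \<Rightarrow> (int \<Rightarrow> complex) \<Rightarrow> (int \<Rightarrow> complex)" where
  "linext N f v = (\<lambda>j. \<Sum>i\<in>{-N..N-1}. v i * f i j)"

definition rho0 :: "complex \<Rightarrow> int \<Rightarrow> (int \<Rightarrow> complex) \<Rightarrow> (int \<Rightarrow> complex)" where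
  "rho0 q N = linext N (rho0_u q N)"

definition rhoInf :: "complex \<Rightarrow> int \<Rightarrow> int \<Rightarrow> (int \<Rightarrow> complex) \<Rightarrow> (int \<Rightarrow> complex)" where
  "rhoInf q k N = linext N (rhoInf_u q k N)"

definition csubspace_of :: "int \<Rightarrow> (int \<Rightarrow> complex) set \<Rightarrow> bool" where
  "csubspace_of N W \<longleftrightarrow> W \<subseteq> Vsp N \<and> (\<lambda>_. 0) \<in> W
     \<and> (\<forall>v\<in>W. \<forall>w\<in>W. (\<lambda>j. v j + w j) \<in> W)
     \<and> (\<forall>c. \<forall>v\<in>W. (\<lambda>j. c * v j) \<in> W)"

text \<open>Reducible: there is a nonzero proper subspace invariant under rho(alpha_0) and
  rho(alpha_infinity) (these generate the image of the skein algebra for q^4 /= 1).\<close>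
definition reducible_rep :: "complex \<Rightarrow> int \<Rightarrow> int \<Rightarrow> bool" where
  "reducible_rep q k N \<longleftrightarrow> (\<exists>W. csubspace_of N W \<and> W \<noteq> {\<lambda>_. 0} \<and> W \<noteq> Vsp N
     \<and> (\<forall>v\<in>W. rho0 q N v \<in> W \<and> rhoInf q k N v \<in> W))"

end

theory Submission
  imports Defs
begin

text \<open>Put \<open>x = q\<^bsup>4k+2\<^esup>\<close>. As \<open>q\<^sup>2\<close> has order \<open>2N\<close>, \<open>w = -x - x\<^sup>-\<^sup>1\<close> equals 2 iff \<open>x = -1\<close> iff \<open>N\<close>
  divides \<open>2k+1\<close>. Let \<open>m\<close> be the residue of \<open>k\<close> modulo \<open>N\<close>.

  If \<open>N\<close> does not divide \<open>2k+1\<close>, then \<open>N \<noteq> 2m+1\<close>. For \<open>2m+2 \<le> N\<close> the coefficients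
  \<open>s'\<^sub>m\<close>, \<open>s'\<^sub>m\<^sub>-\<^sub>N\<close> (and, if \<open>m = 0\<close>, also \<open>q\<^bsup>2k\<^esup> - q\<^bsup>-2k\<^esup>\<close>) vanish and the basis
  vectors outside the window \<open>m < i < N-m\<close> span an invariant subspace; for \<open>2m \<ge> N\<close> the
  coefficients \<open>s\<^sub>m\<close>, \<open>s\<^sub>m\<^sub>-\<^sub>N\<close> vanish and the basis vectors with \<open>-m \<le> i \<le> m-N\<close> span one.

  If \<open>N\<close> divides \<open>2k+1\<close>, then \<open>N = 2m+1\<close>. The eigenvalues \<open>\<lambda>\<^sub>i\<close> of \<open>\<rho>(\<alpha>\<^sub>0)\<close> separate the
  indices in \<open>1..N-1\<close> and in \<open>-N..0\<close>, so a nonzero invariant subspace contains some \<open>u\<^sub>t\<close>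
  with \<open>t \<le> 0\<close>. The nonvanishing coefficients \<open>s\<^sub>i\<close> of \<open>\<rho>(\<alpha>\<^sub>\<infinity>)\<close> connect all \<open>u\<^sub>i\<close> within each of
  the blocks \<open>-m..0\<close> and \<open>-N..-m-1\<close>, the coefficients \<open>s'\<^sub>i\<close> carry a block to the positive
  indices, and where \<open>s'\<^sub>m\<close> resp. \<open>s'\<^sub>-\<^sub>m\<^sub>-\<^sub>1\<close> vanish, the \<open>\<beta>\<close>-terms pass to the other block.
  Hence the subspace contains every \<open>u\<^sub>i\<close>.\<close>

lemma power_int_eq_1_iff_dvd:
  fixes z :: complex
  assumes "n > 0" "z ^ n = 1" and minimal: "\<And>m. 0 < m \<Longrightarrow> z ^ m = 1 \<Longrightarrow> n \<le> m"
  shows "z powi a = 1 \<longleftrightarrow> int n dvd a"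
proof -
  have z: "z \<noteq> 0" and zn: "z powi int n = 1"
    using assms(1,2) by (auto simp: power_int_of_nat power_0_left)
  have "z powi a = (z powi int n) powi (a div int n) * z powi (a mod int n)"
    using z by (metis div_mult_mod_eq mult.commute power_int_add power_int_mult)
  hence "z powi a = 1 \<longleftrightarrow> z ^ nat (a mod int n) = 1"
    using zn assms(1) by (simp add: power_int_def)
  also have "\<dots> \<longleftrightarrow> a mod int n = 0"
  proof -
    have "0 \<le> a mod int n" "a mod int n < int n" using assms(1) by simp_all
    thus ?thesis using minimal[of "nat (a mod int n)"] by (cases "a mod int n = 0") auto
  qed
  finally show ?thesis by (simp add: dvd_eq_mod_eq_0)
qed

lemma zdvd_bounded_iff:
  fixes N x :: int
  assumes "-N < x" "x < N"
  shows "N dvd x \<longleftrightarrow> x = 0"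
  using dvd_imp_le_int[of x N] assms by (cases "x = 0") (auto simp: abs_if split: if_splits)

lemma dvd_diff_iff_of_dvd_diff: "(N::int) dvd (k - m) \<Longrightarrow> N dvd (i - k) \<longleftrightarrow> N dvd (i - m)"
  using dvd_add_left_iff[of N "k - m" "i - k"] by simp

lemma int_interval_propagate:
  fixes a b :: int
  assumes up: "\<And>i. a \<le> i \<Longrightarrow> i < b \<Longrightarrow> P i \<Longrightarrow> P (i + 1)"
    and down: "\<And>i. a < i \<Longrightarrow> i \<le> b \<Longrightarrow> P i \<Longrightarrow> P (i - 1)"
    and t: "a \<le> t" "t \<le> b" "P t" and s: "a \<le> s" "s \<le> b"
  shows "P s"
proof -
  have "a \<le> i \<longrightarrow> P i" if "i \<le> t" for i
    using that by (induction i rule: int_le_induct) (use t down in auto)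
  hence "P a" using t by simp
  have "i \<le> b \<longrightarrow> P i" if "a \<le> i" for i
    using that by (induction i rule: int_ge_induct) (use \<open>P a\<close> up in auto)
  thus ?thesis using s by simp
qed

lemma qp_add: "q \<noteq> 0 \<Longrightarrow> qp q (a + b) = qp q a * qp q b"
  by (simp add: qp_def power_int_add)

lemma qp_minus: "q \<noteq> 0 \<Longrightarrow> qp q (-a) = inverse (qp q a)"
  by (simp add: qp_def power_int_minus)

lemma qp_nonzero: "q \<noteq> 0 \<Longrightarrow> qp q a \<noteq> 0"
  by (simp add: qp_def)

lemma lam_minus: "lam q (-i) = lam q i"
  by (simp add: lam_def add.commute)

locale even_order_root =
  fixes q :: complex and N :: int
  assumes q_nonzero: "q \<noteq> 0"
    and qp_2_eq_1_iff: "\<And>a. qp q (2*a) = 1 \<longleftrightarrow> 2*N dvd a"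
    and N_ge_2: "N \<ge> 2"
begin

lemma qp_minus_double: "qp q (-2*a) = inverse (qp q (2*a))"
  using qp_minus[OF q_nonzero, of "2*a"] by simp

lemma qp_double_square: "qp q (2*a) * qp q (2*a) = qp q (2*(2*a))"
  using qp_add[OF q_nonzero, of "2*a" "2*a"] by simp

lemma qdiff_eq_0_iff: "qp q (2*a) - qp q (-2*a) = 0 \<longleftrightarrow> N dvd a"
proof -
  have "qp q (2*a) - qp q (-2*a) = 0 \<longleftrightarrow> qp q (2*a) * qp q (2*a) = 1"
    unfolding qp_minus_double using qp_nonzero[OF q_nonzero, of "2*a"] by (auto simp: field_simps)
  also have "\<dots> \<longleftrightarrow> 2*N dvd 2*a" by (simp only: qp_double_square qp_2_eq_1_iff)
  finally show ?thesis by simp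
qed

lemma lam_eq_imp_dvd: "lam q a = lam q b \<Longrightarrow> 2*N dvd (a - b) \<or> 2*N dvd (a + b)"
proof -
  assume "lam q a = lam q b"
  define x y where "x = qp q (2*a)" and "y = qp q (2*b)"
  have "x \<noteq> 0" "y \<noteq> 0" using qp_nonzero[OF q_nonzero] by (auto simp: x_def y_def)
  moreover have "x + inverse x = y + inverse y"
    using \<open>lam q a = lam q b\<close> unfolding lam_def qp_minus_double x_def y_def .
  ultimately have "(x - y) * (x * y - 1) = 0" by (simp add: field_simps)
  hence "x * inverse y = 1 \<or> x * y = 1" using \<open>y \<noteq> 0\<close> by auto
  moreover have "x * inverse y = qp q (2*(a - b))" "x * y = qp q (2*(a + b))"
  proof -
    have "2*(a - b) = 2*a + -2*b" "2*(a + b) = 2*a + 2*b" by simp_all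
    thus "x * inverse y = qp q (2*(a - b))" "x * y = qp q (2*(a + b))"
      by (simp_all only: x_def y_def qp_add[OF q_nonzero] qp_minus_double)
  qed
  ultimately show ?thesis by (metis qp_2_eq_1_iff)
qed

lemma inj_on_lam_pos: "inj_on (lam q) {1..N-1}"
proof (rule inj_onI, rule ccontr)
  fix a b assume ab: "a \<in> {1..N-1}" "b \<in> {1..N-1}" "lam q a = lam q b" "a \<noteq> b"
  from lam_eq_imp_dvd[OF ab(3)] show False
  proof
    assume "2*N dvd (a - b)"
    hence "a - b = 0" using zdvd_bounded_iff[of "2*N"] ab by auto
    with ab show False by simp
  next
    assume "2*N dvd (a + b)"
    hence "a + b = 0" using zdvd_bounded_iff[of "2*N"] ab by auto
    with ab show False by simp
  qed
qed

lemma inj_on_lam_nonpos: "inj_on (lam q) {-N..0}"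
proof (rule inj_onI, rule ccontr)
  fix a b assume ab: "a \<in> {-N..0}" "b \<in> {-N..0}" "lam q a = lam q b" "a \<noteq> b"
  from lam_eq_imp_dvd[OF ab(3)] show False
  proof
    assume "2*N dvd (a - b)"
    hence "a - b = 0" using zdvd_bounded_iff[of "2*N"] ab by auto
    with ab show False by simp
  next
    assume "2*N dvd (a + b)"
    moreover have "a + b \<noteq> -2*N" using ab by auto
    ultimately have "a + b = 0" using zdvd_bounded_iff[of "2*N"] ab by auto
    with ab show False by simp
  qed
qed

lemma sc_eq_0: "N dvd (i - k) \<Longrightarrow> sc q k i = 0"
  using qdiff_eq_0_iff[of "i - k"] by (simp add: sc_def algebra_simps)

lemma sc'_eq_0: "N dvd (i - k) \<Longrightarrow> sc' q k i = 0"
  by (simp add: sc'_def sc_eq_0)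

lemma sc_nonzero: "\<not> N dvd (i - k) \<Longrightarrow> \<not> N dvd i \<Longrightarrow> sc q k i \<noteq> 0"
  using qdiff_eq_0_iff[of "i - k"] qdiff_eq_0_iff[of i] by (simp add: sc_def algebra_simps)

lemma sc'_nonzero:
  assumes "\<not> N dvd (i + 1)" "\<not> N dvd i" "\<not> N dvd (i - k)"
  shows "sc' q k i \<noteq> 0"
proof -
  have "2*i + 2 = 2*(i + 1)" "-2*i - 2 = -2*(i + 1)" by simp_all
  thus ?thesis using assms qdiff_eq_0_iff[of "i + 1"] qdiff_eq_0_iff[of i] sc_nonzero[of i k]
    by (simp only: sc'_def) simp
qed

lemma bet_nonzero: "\<not> N dvd k \<Longrightarrow> \<not> N dvd i \<Longrightarrow> bet q k i \<noteq> 0"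
  using qdiff_eq_0_iff[of k] qdiff_eq_0_iff[of i] by (simp add: bet_def)

lemma qdiff_product_nonzero:
  "\<not> N dvd k \<Longrightarrow> (qp q 2 - qp q (-2)) * (qp q (2*k) - qp q (-2*k)) \<noteq> 0"
  using qdiff_eq_0_iff[of 1] qdiff_eq_0_iff[of k] N_ge_2 by (auto simp: zdvd_not_zless)

lemma w_eq_2_iff: "- qp q (4*k + 2) - qp q (-4*k - 2) = 2 \<longleftrightarrow> N dvd (2*k + 1)"
proof -
  define x where "x = qp q (2*(2*k + 1))"
  have "x \<noteq> 0" using qp_nonzero[OF q_nonzero] by (simp add: x_def)
  have "4*k + 2 = 2*(2*k + 1)" "-4*k - 2 = -2*(2*k + 1)" by simp_all
  hence "- qp q (4*k + 2) - qp q (-4*k - 2) = 2 \<longleftrightarrow> - x - inverse x = 2"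
    by (simp only: x_def qp_minus_double)
  also have "\<dots> \<longleftrightarrow> (x + 1) * (x + 1) = 0"
    using \<open>x \<noteq> 0\<close> by (auto simp: field_simps) algebra+
  also have "\<dots> \<longleftrightarrow> x * x = 1 \<and> x \<noteq> 1"
    by (auto simp: algebra_simps) algebra+
  also have "\<dots> \<longleftrightarrow> 2*N dvd 2*(2*k + 1) \<and> \<not> 2*N dvd (2*k + 1)"
    by (simp only: x_def qp_double_square qp_2_eq_1_iff)
  also have "\<dots> \<longleftrightarrow> N dvd (2*k + 1)"
    using dvd_mult_left[of 2 N "2*k + 1"]
    by (simp only: dvd_times_left_cancel_iff zero_neq_numeral not_False_eq_True) auto
  finally show ?thesis .
qed

end

section \<open>Invariant subspaces\<close>

lemma linext_ub: "-N \<le> i \<Longrightarrow> i \<le> N-1 \<Longrightarrow> linext N f (ub N i) = f i"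
  unfolding linext_def ub_def
  by (rule ext, subst sum.cong[OF refl, where h="\<lambda>i'. if i' = i then f i j else 0" for j]) auto

lemma linext_lincomb:
  "linext N f (\<lambda>j. a * x j + b * y j) = (\<lambda>j. a * linext N f x j + b * linext N f y j)"
  unfolding linext_def
  by (rule ext) (simp add: distrib_right sum.distrib sum_distrib_left mult.assoc)

lemma rho0_coord:
  "rho0 q N v j = (if -N \<le> j \<and> j \<le> N-1 then lam q j * v j else 0)
    + (if -N < j \<and> j < 0 then v (-j) else 0)"
proof -
  have "rho0 q N v j = (\<Sum>i\<in>{-N..N-1}. (if j = i then v i * lam q i else 0)
      + (if i = -j then (if 0 < i then v i else 0) else 0))"
    unfolding rho0_def linext_def by (rule sum.cong) (auto simp: rho0_u_def ub_def)
  thus ?thesis by (simp add: sum.distrib cong: if_cong)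
qed

lemma rho0_ub_nonpos: "-N \<le> i \<Longrightarrow> i \<le> 0 \<Longrightarrow> 0 < N \<Longrightarrow> rho0 q N (ub N i) = (\<lambda>j. lam q i * ub N i j)"
  unfolding rho0_def by (subst linext_ub) (auto simp: rho0_u_def)

lemma rho0_ub_pos:
  "0 < i \<Longrightarrow> i \<le> N-1 \<Longrightarrow> rho0 q N (ub N i) = (\<lambda>j. lam q i * ub N i j + ub N (-i) j)"
  unfolding rho0_def by (subst linext_ub) (auto simp: rho0_u_def)

lemma rhoInf_ub: "-N \<le> i \<Longrightarrow> i \<le> N-1 \<Longrightarrow> rhoInf q k N (ub N i) = rhoInf_u q k N i"
  unfolding rhoInf_def by (rule linext_ub)

locale invariant_subspace =
  fixes q :: complex and k N :: int and W :: "(int \<Rightarrow> complex) set"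
  assumes subspace: "csubspace_of N W"
    and rho0_mem: "v \<in> W \<Longrightarrow> rho0 q N v \<in> W"
    and rhoInf_mem: "v \<in> W \<Longrightarrow> rhoInf q k N v \<in> W"
begin

lemma mem_Vsp: "v \<in> W \<Longrightarrow> v \<in> Vsp N"
  using subspace by (auto simp: csubspace_of_def)

lemma zero_mem: "(\<lambda>_. 0) \<in> W"
  using subspace by (simp add: csubspace_of_def)

lemma add_mem: "x \<in> W \<Longrightarrow> y \<in> W \<Longrightarrow> (\<lambda>j. x j + y j) \<in> W"
  using subspace by (simp add: csubspace_of_def)

lemma scale_mem: "c = 0 \<or> x \<in> W \<Longrightarrow> (\<lambda>j. c * x j) \<in> W"
  using subspace zero_mem by (auto simp: csubspace_of_def)

lemma lincomb_mem: "x \<in> W \<Longrightarrow> y \<in> W \<Longrightarrow> (\<lambda>j. a * x j + b * y j) \<in> W"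
  by (intro add_mem scale_mem) simp_all

lemma unscale_mem: "(\<lambda>j. c * x j) \<in> W \<Longrightarrow> c \<noteq> 0 \<Longrightarrow> x \<in> W"
  using scale_mem[of "inverse c" "\<lambda>j. c * x j"] by (simp add: mult.assoc[symmetric])

lemma lincomb_cancel:
  "(\<lambda>j. a * x j + b * y j) \<in> W \<Longrightarrow> y \<in> W \<Longrightarrow> a \<noteq> 0 \<Longrightarrow> x \<in> W"
  using lincomb_mem[of "\<lambda>j. a * x j + b * y j" y 1 "-b"] unscale_mem[of a x] by simp

lemma lincomb4_cancel:
  assumes F: "(\<lambda>j. a * x j + b * y j + c * z j + d * t j) \<in> W"
    and "b = 0 \<or> y \<in> W" "c = 0 \<or> z \<in> W" "d = 0 \<or> t \<in> W" "a \<noteq> 0"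
  shows "x \<in> W"
proof -
  have "(\<lambda>j. b * y j + c * z j + d * t j) \<in> W"
    using assms(2-4) by (intro add_mem scale_mem)
  moreover have "(\<lambda>j. a * x j + 1 * (b * y j + c * z j + d * t j)) \<in> W"
    using F by (simp add: add.assoc)
  ultimately show ?thesis
    using lincomb_cancel[where y="\<lambda>j. b * y j + c * z j + d * t j"] \<open>a \<noteq> 0\<close> by blast
qed

lemma sum_ub_mem: "finite F \<Longrightarrow> \<forall>i\<in>F. ub N i \<in> W \<Longrightarrow> (\<lambda>j. \<Sum>i\<in>F. v i * ub N i j) \<in> W"
proof (induction F rule: finite_induct)
  case (insert i F)
  thus ?case using add_mem[OF scale_mem[of "v i" "ub N i"]] by (simp add: sum.insert_remove)
qed (simp add: zero_mem)

lemma eq_Vsp_if_ub_mem: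
  assumes ub: "\<And>i. -N \<le> i \<Longrightarrow> i \<le> N-1 \<Longrightarrow> ub N i \<in> W"
  shows "W = Vsp N"
proof
  show "Vsp N \<subseteq> W"
  proof
    fix v assume v: "v \<in> Vsp N"
    have "(\<lambda>j. \<Sum>i\<in>{-N..N-1}. v i * ub N i j) = v"
    proof
      fix j
      have "(\<Sum>i\<in>{-N..N-1}. v i * ub N i j) = (\<Sum>i\<in>{-N..N-1}. if i = j then v j else 0)"
        by (rule sum.cong) (auto simp: ub_def)
      thus "(\<Sum>i\<in>{-N..N-1}. v i * ub N i j) = v j" using v by (auto simp: Vsp_def)
    qed
    moreover have "(\<lambda>j. \<Sum>i\<in>{-N..N-1}. v i * ub N i j) \<in> W" using ub by (intro sum_ub_mem) auto
    ultimately show "v \<in> W" by simp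
  qed
qed (use mem_Vsp in auto)

lemma rho0_shift_mem: "x \<in> W \<Longrightarrow> (\<lambda>j. rho0 q N x j - \<mu> * x j) \<in> W"
  using lincomb_mem[OF rho0_mem, of x x 1 "-\<mu>"] by simp

lemma ub_mem_of_nonpos_pair:
  assumes x: "(\<lambda>j. a * ub N p j + b * ub N r j) \<in> W" and "a \<noteq> 0" "lam q p \<noteq> lam q r"
    and "-N \<le> p" "p \<le> 0" "-N \<le> r" "r \<le> 0" "0 < N"
  shows "ub N p \<in> W"
proof -
  have "(\<lambda>j. rho0 q N (\<lambda>j. a * ub N p j + b * ub N r j) j
      - lam q r * (a * ub N p j + b * ub N r j)) \<in> W"
    using rho0_shift_mem[OF x] by simp
  also have "(\<lambda>j. rho0 q N (\<lambda>j. a * ub N p j + b * ub N r j) j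
      - lam q r * (a * ub N p j + b * ub N r j)) = (\<lambda>j. (a * (lam q p - lam q r)) * ub N p j)"
    using assms(4-) unfolding rho0_def linext_lincomb unfolding rho0_def[symmetric]
    by (simp add: rho0_ub_nonpos algebra_simps)
  finally show ?thesis using unscale_mem assms(2,3) by simp
qed

lemma ub_mem_of_mirror_pair:
  assumes x: "(\<lambda>j. c * ub N (-t) j + d * ub N t j) \<in> W" and "d \<noteq> 0" "0 < t" "t \<le> N-1"
  shows "ub N (-t) \<in> W" "ub N t \<in> W"
proof -
  have "(\<lambda>j. rho0 q N (\<lambda>j. c * ub N (-t) j + d * ub N t j) j
      - lam q t * (c * ub N (-t) j + d * ub N t j)) \<in> W"
    using rho0_shift_mem[OF x] by simp
  also have "(\<lambda>j. rho0 q N (\<lambda>j. c * ub N (-t) j + d * ub N t j) j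
      - lam q t * (c * ub N (-t) j + d * ub N t j)) = (\<lambda>j. d * ub N (-t) j)"
    using assms(3,4) unfolding rho0_def linext_lincomb unfolding rho0_def[symmetric]
    by (simp add: rho0_ub_nonpos rho0_ub_pos lam_minus algebra_simps)
  finally show "ub N (-t) \<in> W" using unscale_mem \<open>d \<noteq> 0\<close> by simp
  moreover have "(\<lambda>j. d * ub N t j + c * ub N (-t) j) \<in> W" using x by (simp add: add.commute)
  ultimately show "ub N t \<in> W" using lincomb_cancel \<open>d \<noteq> 0\<close> by blast
qed

text \<open>Applying \<open>\<rho>(\<alpha>\<^sub>0) - \<lambda>\<^sub>t\<close> kills the coordinate \<open>t\<close> of a vector; for \<open>t > 0\<close> it moves it to
  the coordinate \<open>-t\<close>, so the vector stays nonzero.\<close>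

lemma ex_mem_vanishing_on_pos:
  assumes inj: "inj_on (lam q) {1..N-1}"
  shows "v \<in> W \<Longrightarrow> v \<noteq> (\<lambda>_. 0) \<Longrightarrow> \<exists>v'\<in>W. v' \<noteq> (\<lambda>_. 0) \<and> (\<forall>j>0. v' j = 0)"
proof (induction "card {j\<in>{1..N-1}. v j \<noteq> 0}" arbitrary: v rule: less_induct)
  case (less v)
  show ?case
  proof (cases "\<exists>t\<in>{1..N-1}. v t \<noteq> 0")
    case False
    hence "\<forall>j>0. v j = 0" using mem_Vsp[OF less.prems(1)] by (auto simp: Vsp_def not_le)
    thus ?thesis using less.prems by blast
  next
    case True
    then obtain t where t: "t \<in> {1..N-1}" "v t \<noteq> 0" by blast
    define v' where "v' = (\<lambda>j. rho0 q N v j - lam q t * v j)"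
    have "v' \<in> W" unfolding v'_def using less.prems rho0_shift_mem by blast
    have "v' j = (lam q j - lam q t) * v j" if "j \<in> {1..N-1}" for j
      using that unfolding v'_def rho0_coord by (simp add: algebra_simps)
    hence set: "{j\<in>{1..N-1}. v' j \<noteq> 0} = {j\<in>{1..N-1}. v j \<noteq> 0} - {t}"
      using inj_onD[OF inj] t by auto
    have "finite {j\<in>{1..N-1}. v j \<noteq> 0}" by (rule finite_subset[of _ "{1..N-1}"]) auto
    hence "card {j\<in>{1..N-1}. v' j \<noteq> 0} < card {j\<in>{1..N-1}. v j \<noteq> 0}"
      unfolding set by (rule card_Diff1_less) (use t in simp)
    moreover have "v' (-t) = v t" using t unfolding v'_def rho0_coord by (simp add: lam_minus)
    hence "v' \<noteq> (\<lambda>_. 0)" using t by auto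
    ultimately show ?thesis using less.hyps \<open>v' \<in> W\<close> by blast
  qed
qed

lemma ex_ub_mem_of_vanishing_on_pos:
  assumes inj: "inj_on (lam q) {-N..0}"
  shows "v \<in> W \<Longrightarrow> v \<noteq> (\<lambda>_. 0) \<Longrightarrow> \<forall>j>0. v j = 0 \<Longrightarrow> \<exists>t\<in>{-N..0}. ub N t \<in> W"
proof (induction "card {j\<in>{-N..0}. v j \<noteq> 0}" arbitrary: v rule: less_induct)
  case (less v)
  have supp: "j \<in> {-N..0} \<and> j < N" if "v j \<noteq> 0" for j
  proof -
    have "\<not> j < -N" "\<not> 0 < j" "\<not> N \<le> j"
      using that less.prems(3) mem_Vsp[OF less.prems(1)] by (auto simp: Vsp_def)
    thus ?thesis by simp
  qed
  obtain t where t: "t \<in> {-N..0}" "v t \<noteq> 0" using less.prems(2) supp by auto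
  show ?case
  proof (cases "{j\<in>{-N..0}. v j \<noteq> 0} = {t}")
    case True
    hence "v = (\<lambda>j. v t * ub N t j)" using supp t by (auto simp: ub_def fun_eq_iff)
    hence "ub N t \<in> W" using unscale_mem less.prems(1) t by metis
    thus ?thesis using t by blast
  next
    case False
    define v' where "v' = (\<lambda>j. rho0 q N v j - lam q t * v j)"
    have "v' \<in> W" unfolding v'_def using less.prems rho0_shift_mem by blast
    have "v j = 0" if "\<not> (-N \<le> j \<and> j \<le> N-1)" for j
      using supp[of j] that by (cases "v j = 0") auto
    hence v': "v' j = (lam q j - lam q t) * v j" for j
      using less.prems(3) unfolding v'_def rho0_coord by (auto simp: algebra_simps)
    hence set: "{j\<in>{-N..0}. v' j \<noteq> 0} = {j\<in>{-N..0}. v j \<noteq> 0} - {t}"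
      using inj_onD[OF inj] t by auto
    have "card {j\<in>{-N..0}. v' j \<noteq> 0} < card {j\<in>{-N..0}. v j \<noteq> 0}"
      unfolding set by (rule card_Diff1_less)
        (use t in \<open>auto intro: finite_subset[OF _ finite_atLeastAtMost_int]\<close>)
    moreover have "v' \<noteq> (\<lambda>_. 0)" using False t set by auto
    moreover have "\<forall>j>0. v' j = 0" using less.prems(3) v' by simp
    ultimately show ?thesis using less.hyps \<open>v' \<in> W\<close> by blast
  qed
qed

lemma ex_ub_mem_nonpos:
  assumes "inj_on (lam q) {1..N-1}" "inj_on (lam q) {-N..0}" "W \<noteq> {\<lambda>_. 0}"
  shows "\<exists>t\<in>{-N..0}. ub N t \<in> W"
proof -
  obtain v where "v \<in> W" "v \<noteq> (\<lambda>_. 0)" using assms(3) zero_mem by blast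
  thus ?thesis using ex_mem_vanishing_on_pos[OF assms(1)] ex_ub_mem_of_vanishing_on_pos[OF assms(2)]
    by metis
qed

end

lemma reducible_rep_iff_invariant_subspace:
  "reducible_rep q k N \<longleftrightarrow> (\<exists>W. invariant_subspace q k N W \<and> W \<noteq> {\<lambda>_. 0} \<and> W \<noteq> Vsp N)"
  unfolding reducible_rep_def invariant_subspace_def by blast

lemma linext_mem_vanishing_on:
  assumes "\<And>i j. -N \<le> i \<Longrightarrow> i \<le> N-1 \<Longrightarrow> \<not> K i \<Longrightarrow> K j \<Longrightarrow> f i j = 0"
    and "\<And>i j. \<not> (-N \<le> j \<and> j \<le> N-1) \<Longrightarrow> f i j = 0"
    and "v \<in> {v \<in> Vsp N. \<forall>j. K j \<longrightarrow> v j = 0}"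
  shows "linext N f v \<in> {v \<in> Vsp N. \<forall>j. K j \<longrightarrow> v j = 0}"
proof -
  have "linext N f v j = 0" if "K j" for j
    unfolding linext_def using assms(1)[of _ j] assms(3) that by (intro sum.neutral) force
  thus ?thesis using assms(2) by (auto simp: Vsp_def linext_def)
qed

text \<open>The invariant subspace is the span of the basis vectors \<open>u\<^sub>i\<close> with \<open>\<not> K i\<close>.\<close>

lemma reducible_rep_of_coordinate_subspace:
  assumes rho0_entry: "\<And>i j. -N \<le> i \<Longrightarrow> i \<le> N-1 \<Longrightarrow> \<not> K i \<Longrightarrow> K j \<Longrightarrow> rho0_u q N i j = 0"
    and rhoInf_entry: "\<And>i j. -N \<le> i \<Longrightarrow> i \<le> N-1 \<Longrightarrow> \<not> K i \<Longrightarrow> K j \<Longrightarrow> rhoInf_u q k N i j = 0"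
    and a: "-N \<le> a" "a \<le> N-1" "\<not> K a" and b: "-N \<le> b" "b \<le> N-1" "K b"
  shows "reducible_rep q k N"
  unfolding reducible_rep_iff_invariant_subspace
proof (intro exI conjI)
  let ?W = "{v \<in> Vsp N. \<forall>j. K j \<longrightarrow> v j = 0}"
  have ub_out: "\<not> (-N \<le> j \<and> j \<le> N-1) \<Longrightarrow> ub N i j = 0" for i j by (auto simp: ub_def)
  show "invariant_subspace q k N ?W"
  proof
    show "csubspace_of N ?W" unfolding csubspace_of_def Vsp_def by auto
  next
    fix v assume v: "v \<in> ?W"
    show "rho0 q N v \<in> ?W" unfolding rho0_def
      by (rule linext_mem_vanishing_on[OF rho0_entry _ v]) (auto simp: rho0_u_def ub_out)
    show "rhoInf q k N v \<in> ?W" unfolding rhoInf_def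
      by (rule linext_mem_vanishing_on[OF rhoInf_entry _ v]) (auto simp: rhoInf_u_def ub_out)
  qed
  have "ub N a \<in> ?W" "ub N a \<noteq> (\<lambda>_. 0)" using a by (auto simp: Vsp_def ub_def fun_eq_iff)
  thus "?W \<noteq> {\<lambda>_. 0}" by blast
  have "ub N b \<in> Vsp N" "ub N b \<notin> ?W" using b by (auto simp: Vsp_def ub_def)
  thus "?W \<noteq> Vsp N" by blast
qed

section \<open>The reducible case\<close>

context even_order_root
begin

lemma ub_eq_0: "i \<noteq> j \<Longrightarrow> ub N i j = 0"
  by (simp add: ub_def)

lemma reducible_of_small_residue:
  assumes m: "0 \<le> m" "2*m + 2 \<le> N" "N dvd (k - m)"
  shows "reducible_rep q k N"
proof (rule reducible_rep_of_coordinate_subspace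
    [where K="\<lambda>j. m+1 \<le> j \<and> j \<le> N-1-m" and a=0 and b="m+1"])
  have k: "N dvd (i - k) \<longleftrightarrow> N dvd (i - m)" for i using dvd_diff_iff_of_dvd_diff[OF m(3)] .
  have sc'_m: "sc' q k m = 0" and sc'_mN: "sc' q k (m - N) = 0" by (simp_all add: sc'_eq_0 k)
  have qdiff_k: "m = 0 \<Longrightarrow> qp q (2*k) - qp q (-2*k) = 0" using m(3) qdiff_eq_0_iff[of k] by simp
  fix i j :: int
  assume i: "-N \<le> i" "i \<le> N-1" "\<not> (m+1 \<le> i \<and> i \<le> N-1-m)" and j: "m+1 \<le> j \<and> j \<le> N-1-m"
  show "rho0_u q N i j = 0" using i j m by (auto simp: rho0_u_def ub_def)
  consider "i = -N" | "-N < i \<and> i < 0" | "i = 0" | "0 < i" using i by linarith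
  then show "rhoInf_u q k N i j = 0"
  proof cases
    case 1
    have "(qp q (2*k) - qp q (-2*k)) * ub N (N - 1) j = 0"
      using qdiff_k j m by (cases "m = 0") (auto simp: ub_eq_0)
    thus ?thesis using 1 j m by (simp add: rhoInf_u_def ub_eq_0)
  next
    case 2
    thus ?thesis using j m by (simp add: rhoInf_u_def ub_eq_0)
  next
    case 3
    have "(qp q (2*k) - qp q (-2*k)) * ub N 1 j = 0"
      using qdiff_k j m by (cases "m = 0") (auto simp: ub_eq_0)
    thus ?thesis using 3 j m N_ge_2 by (simp add: rhoInf_u_def ub_eq_0)
  next
    case 4
    have sc'_minus: "sc' q k (-i) * ub N (i - 1) j = 0"
    proof (cases "i - 1 = j")
      case True
      hence "-i = m - N" using i j by linarith
      thus ?thesis using sc'_mN by simp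
    qed (simp add: ub_eq_0)
    have sc'_plus: "sc' q k i * ub N (i + 1) j = 0"
    proof (cases "i + 1 = j")
      case True
      hence "i = m" using i j by linarith
      thus ?thesis using sc'_m by simp
    qed (simp add: ub_eq_0)
    show ?thesis using 4 j m by (simp add: rhoInf_u_def ub_eq_0 sc'_minus sc'_plus)
  qed
qed (use m N_ge_2 in auto)

lemma reducible_of_large_residue:
  assumes m: "N \<le> 2*m" "m \<le> N - 1" "N dvd (k - m)"
  shows "reducible_rep q k N"
proof (rule reducible_rep_of_coordinate_subspace
    [where K="\<lambda>j. j < -m \<or> m - N < j" and a="-m" and b=0])
  have k: "N dvd (i - k) \<longleftrightarrow> N dvd (i - m)" for i using dvd_diff_iff_of_dvd_diff[OF m(3)] .
  have sc_m: "sc q k m = 0" and sc_mN: "sc q k (m - N) = 0" by (simp_all add: sc_eq_0 k)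
  fix i j :: int
  assume i: "-N \<le> i" "i \<le> N-1" "\<not> (i < -m \<or> m - N < i)" and j: "j < -m \<or> m - N < j"
  show "rho0_u q N i j = 0" using i j m by (auto simp: rho0_u_def ub_def)
  have sc_plus: "sc q k i * ub N (i + 1) j = 0"
  proof (cases "i + 1 = j")
    case True
    hence "i = m - N" using i j by linarith
    thus ?thesis using sc_mN by simp
  qed (simp add: ub_eq_0)
  have sc_minus: "sc q k (-i) * ub N (i - 1) j = 0"
  proof (cases "i - 1 = j")
    case True
    hence "-i = m" using i j by linarith
    thus ?thesis using sc_m by simp
  qed (simp add: ub_eq_0)
  have "-N < i" "i < 0" using i m by linarith+
  thus "rhoInf_u q k N i j = 0" by (simp add: rhoInf_u_def sc_plus sc_minus)
qed (use m N_ge_2 in auto)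

lemma reducible_if_not_dvd: "\<not> N dvd (2*k + 1) \<Longrightarrow> reducible_rep q k N"
proof -
  assume ndvd: "\<not> N dvd (2*k + 1)"
  define m where "m = k mod N"
  have m: "0 \<le> m" "m \<le> N - 1" "N dvd (k - m)"
    using N_ge_2 by (auto simp: m_def mod_eq_dvd_iff)
  have "N \<noteq> 2*m + 1"
  proof
    assume N: "N = 2*m + 1"
    have "N dvd 2*(k - m) + N" using m(3) by (intro dvd_add dvd_mult) simp_all
    also have "2*(k - m) + N = 2*k + 1" using N by simp
    finally show False using ndvd by simp
  qed
  hence "2*m + 2 \<le> N \<or> N \<le> 2*m" by linarith
  thus ?thesis using reducible_of_small_residue reducible_of_large_residue m by blast
qed

end

section \<open>The irreducible case\<close>

locale root_invariant_subspace = even_order_root q N + invariant_subspace q k N W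
  for q :: complex and N k :: int and W
begin

lemma N_pos: "0 < N"
  using N_ge_2 by simp

lemma ub_succ_mem:
  assumes "-N < i" "i < 0" "ub N i \<in> W" "sc q k i \<noteq> 0"
  shows "ub N (i + 1) \<in> W"
proof (rule ub_mem_of_nonpos_pair)
  show "(\<lambda>j. sc q k i * ub N (i + 1) j + sc q k (-i) * ub N (i - 1) j) \<in> W"
    using rhoInf_mem[OF assms(3)] assms(1,2) by (simp add: rhoInf_ub rhoInf_u_def)
  show "lam q (i + 1) \<noteq> lam q (i - 1)"
    using inj_onD[OF inj_on_lam_nonpos, of "i + 1" "i - 1"] assms(1,2) by auto
qed (use assms N_pos in auto)

lemma ub_pred_mem:
  assumes "-N < i" "i < 0" "ub N i \<in> W" "sc q k (-i) \<noteq> 0"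
  shows "ub N (i - 1) \<in> W"
proof (rule ub_mem_of_nonpos_pair)
  show "(\<lambda>j. sc q k (-i) * ub N (i - 1) j + sc q k i * ub N (i + 1) j) \<in> W"
    using rhoInf_mem[OF assms(3)] assms(1,2) by (simp add: rhoInf_ub rhoInf_u_def add.commute)
  show "lam q (i - 1) \<noteq> lam q (i + 1)"
    using inj_onD[OF inj_on_lam_nonpos, of "i - 1" "i + 1"] assms(1,2) by auto
qed (use assms N_pos in auto)

lemma ub_zero_mem_imp:
  assumes "ub N 0 \<in> W" "\<not> N dvd k"
  shows "ub N (-1) \<in> W" "ub N 1 \<in> W"
proof -
  have "(\<lambda>j. (qp q (2*k) + qp q (-2*k)) * ub N (-1) j
      + (- ((qp q 2 - qp q (-2)) * (qp q (2*k) - qp q (-2*k)))) * ub N 1 j) \<in> W"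
    using rhoInf_mem[OF assms(1)] N_ge_2 by (simp add: rhoInf_ub rhoInf_u_def)
  from ub_mem_of_mirror_pair[OF this] show "ub N (-1) \<in> W" "ub N 1 \<in> W"
    using qdiff_product_nonzero[OF assms(2)] N_ge_2 by simp_all
qed

lemma ub_minus_N_mem_imp:
  assumes "ub N (-N) \<in> W" "\<not> N dvd k"
  shows "ub N (-N + 1) \<in> W" "ub N (N - 1) \<in> W"
proof -
  have "(\<lambda>j. (qp q (2*k) + qp q (-2*k)) * ub N (-(N - 1)) j
      + (qp q 2 - qp q (-2)) * (qp q (2*k) - qp q (-2*k)) * ub N (N - 1) j) \<in> W"
    using rhoInf_mem[OF assms(1)] N_pos by (simp add: rhoInf_ub rhoInf_u_def)
  from ub_mem_of_mirror_pair[OF this] show "ub N (-N + 1) \<in> W" "ub N (N - 1) \<in> W"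
    using qdiff_product_nonzero[OF assms(2)] N_ge_2 by simp_all
qed

lemma rhoInf_ub_pos_mem:
  assumes "0 < i" "i \<le> N - 1" "ub N i \<in> W"
  shows "(\<lambda>j. bet q k i * ub N (-i - 1) j + (- bet q k i) * ub N (-i + 1) j
      + sc' q k (-i) * ub N (i - 1) j + sc' q k i * ub N (i + 1) j) \<in> W"
  using rhoInf_mem[OF assms(3)] assms(1,2) by (simp add: rhoInf_ub rhoInf_u_def)

end

locale irreducible_setting = even_order_root +
  fixes k m :: int
  assumes N_eq: "N = 2*m + 1" and k_cong: "N dvd (k - m)"
begin

lemma m_ge_1: "1 \<le> m"
  using N_eq N_ge_2 by simp

lemma dvd_diff_k_iff: "N dvd (i - k) \<longleftrightarrow> N dvd (i - m)"
  using dvd_diff_iff_of_dvd_diff[OF k_cong] .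

lemma not_dvd_k: "\<not> N dvd k"
  using dvd_diff_k_iff[of 0] zdvd_bounded_iff[of N "-m"] N_eq m_ge_1 by simp

lemma not_dvd_diff_k:
  assumes "-N < i" "i < N" "i \<noteq> m" "i \<noteq> m - N"
  shows "\<not> N dvd (i - k)"
proof (cases "i < 0")
  case True
  have "\<not> N dvd (i - m + N)" using assms True N_eq by (subst zdvd_bounded_iff) auto
  thus ?thesis using dvd_diff_k_iff by simp
next
  case False
  have "\<not> N dvd (i - m)" using assms False N_eq by (subst zdvd_bounded_iff) auto
  thus ?thesis using dvd_diff_k_iff by simp
qed

lemma sc_nonzero_odd:
  "-N < i \<Longrightarrow> i < N \<Longrightarrow> i \<noteq> 0 \<Longrightarrow> i \<noteq> m \<Longrightarrow> i \<noteq> m - N \<Longrightarrow> sc q k i \<noteq> 0"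
  using sc_nonzero not_dvd_diff_k zdvd_bounded_iff by simp

lemma sc'_nonzero_odd:
  "-N < i \<Longrightarrow> i + 1 < N \<Longrightarrow> i \<noteq> 0 \<Longrightarrow> i \<noteq> -1 \<Longrightarrow> i \<noteq> m \<Longrightarrow> i \<noteq> m - N \<Longrightarrow> sc' q k i \<noteq> 0"
  using sc'_nonzero not_dvd_diff_k zdvd_bounded_iff by simp

lemma bet_nonzero_odd: "0 < i \<Longrightarrow> i < N \<Longrightarrow> bet q k i \<noteq> 0"
  using bet_nonzero not_dvd_k zdvd_bounded_iff by simp

end

locale irreducible_invariant = irreducible_setting q N k m + root_invariant_subspace q N k W
  for q :: complex and N k m :: int and W
begin

lemma low_block_mem:
  assumes "t \<in> {-m..0}" "ub N t \<in> W" "s \<in> {-m..0}"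
  shows "ub N s \<in> W"
proof (rule int_interval_propagate[where P="\<lambda>i. ub N i \<in> W"])
  fix i assume i: "-m \<le> i" "i < 0" "ub N i \<in> W"
  have "sc q k i \<noteq> 0" by (rule sc_nonzero_odd) (use i N_eq in linarith)+
  show "ub N (i + 1) \<in> W"
    by (rule ub_succ_mem[OF _ _ i(3) \<open>sc q k i \<noteq> 0\<close>]) (use i N_eq in linarith)+
next
  fix i assume i: "-m < i" "i \<le> 0" "ub N i \<in> W"
  show "ub N (i - 1) \<in> W"
  proof (cases "i = 0")
    case True thus ?thesis using ub_zero_mem_imp not_dvd_k i by simp
  next
    case False
    have "sc q k (-i) \<noteq> 0" by (rule sc_nonzero_odd) (use i False N_eq in linarith)+
    show ?thesis
      by (rule ub_pred_mem[OF _ _ i(3) \<open>sc q k (-i) \<noteq> 0\<close>]) (use i False N_eq in linarith)+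
  qed
qed (use assms in auto)

lemma high_block_mem:
  assumes "t \<in> {-N..-m-1}" "ub N t \<in> W" "s \<in> {-N..-m-1}"
  shows "ub N s \<in> W"
proof (rule int_interval_propagate[where P="\<lambda>i. ub N i \<in> W"])
  fix i assume i: "-N \<le> i" "i < -m-1" "ub N i \<in> W"
  show "ub N (i + 1) \<in> W"
  proof (cases "i = -N")
    case True thus ?thesis using ub_minus_N_mem_imp not_dvd_k i by simp
  next
    case False
    have "sc q k i \<noteq> 0" by (rule sc_nonzero_odd) (use i False N_eq in linarith)+
    show ?thesis
      by (rule ub_succ_mem[OF _ _ i(3) \<open>sc q k i \<noteq> 0\<close>]) (use i False N_eq in linarith)+
  qed
next
  fix i assume i: "-N < i" "i \<le> -m-1" "ub N i \<in> W"
  have "sc q k (-i) \<noteq> 0" by (rule sc_nonzero_odd) (use i N_eq in linarith)+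
  show "ub N (i - 1) \<in> W"
    by (rule ub_pred_mem[OF _ _ i(3) \<open>sc q k (-i) \<noteq> 0\<close>]) (use i N_eq in linarith)+
qed (use assms in auto)

lemma mem_of_low_block:
  assumes low: "\<And>s. s \<in> {-m..0} \<Longrightarrow> ub N s \<in> W"
  shows "\<And>s. s \<in> {1..m} \<Longrightarrow> ub N s \<in> W" and "ub N (-m-1) \<in> W"
proof -
  have pos: "ub N (i - 1) \<in> W \<and> ub N i \<in> W" if "1 \<le> i" "i \<le> m" for i
    using that
  proof (induction i rule: int_ge_induct)
    case base
    thus ?case using low ub_zero_mem_imp(2) not_dvd_k by simp
  next
    case (step i)
    have comb: "(\<lambda>j. sc' q k i * ub N (i + 1) j + bet q k i * ub N (-i - 1) j
        + (- bet q k i) * ub N (-i + 1) j + sc' q k (-i) * ub N (i - 1) j) \<in> W"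
      using rhoInf_ub_pos_mem[of i] step N_eq by (simp add: algebra_simps)
    have nonzero: "sc' q k i \<noteq> 0" by (rule sc'_nonzero_odd) (use step N_eq in linarith)+
    have "ub N (i + 1) \<in> W"
      by (rule lincomb4_cancel[OF comb _ _ _ nonzero]) (use step low in auto)
    thus ?case using step by simp
  qed
  thus "\<And>s. s \<in> {1..m} \<Longrightarrow> ub N s \<in> W" by auto
  have "sc' q k m = 0" using dvd_diff_k_iff sc'_eq_0 by simp
  have comb: "(\<lambda>j. bet q k m * ub N (-m - 1) j + (- bet q k m) * ub N (-m + 1) j
      + sc' q k (-m) * ub N (m - 1) j + sc' q k m * ub N (m + 1) j) \<in> W"
    using rhoInf_ub_pos_mem[of m] pos[of m] m_ge_1 N_eq by simp
  show "ub N (-m-1) \<in> W"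
    by (rule lincomb4_cancel[OF comb])
      (use \<open>sc' q k m = 0\<close> pos[of m] low[of "-m + 1"] bet_nonzero_odd[of m] m_ge_1 N_eq in auto)
qed

lemma mem_of_high_block:
  assumes high: "\<And>s. s \<in> {-N..-m-1} \<Longrightarrow> ub N s \<in> W"
  shows "\<And>s. s \<in> {m+1..N-1} \<Longrightarrow> ub N s \<in> W" and "ub N (-m) \<in> W"
proof -
  have "ub N (-N) \<in> W" by (rule high) (use N_eq m_ge_1 in simp)
  note top = ub_minus_N_mem_imp(2)[OF this not_dvd_k]
  have neg: "ub N i \<in> W \<and> ub N (i + 1) \<in> W" if "i \<le> N - 1" "m + 1 \<le> i" for i
    using that
  proof (induction i rule: int_le_induct)
    case base
    have "ub N N = (\<lambda>_. 0)" by (simp add: ub_def fun_eq_iff)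
    thus ?case using top zero_mem by simp
  next
    case (step i)
    have comb: "(\<lambda>j. sc' q k (-i) * ub N (i - 1) j + bet q k i * ub N (-i - 1) j
        + (- bet q k i) * ub N (-i + 1) j + sc' q k i * ub N (i + 1) j) \<in> W"
      using rhoInf_ub_pos_mem[of i] step N_eq by (simp add: algebra_simps)
    have nonzero: "sc' q k (-i) \<noteq> 0" by (rule sc'_nonzero_odd) (use step N_eq in linarith)+
    have "ub N (i - 1) \<in> W"
      by (rule lincomb4_cancel[OF comb _ _ _ nonzero]) (use step high N_eq in auto)
    thus ?case using step by simp
  qed
  thus "\<And>s. s \<in> {m+1..N-1} \<Longrightarrow> ub N s \<in> W" by auto
  have m1: "0 < m + 1" "m + 1 \<le> N - 1" using m_ge_1 N_eq by linarith+
  have near: "ub N (m + 1) \<in> W" "ub N (m + 2) \<in> W"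
    using neg[OF m1(2)] by (simp_all add: add.commute)
  have "-m - 1 - m = -N" using N_eq by simp
  hence "sc' q k (-(m + 1)) = 0" using dvd_diff_k_iff[of "-m - 1"] sc'_eq_0 by simp
  have comb: "(\<lambda>j. (- bet q k (m + 1)) * ub N (-m) j + bet q k (m + 1) * ub N (-m - 2) j
      + sc' q k (-(m + 1)) * ub N m j + sc' q k (m + 1) * ub N (m + 2) j) \<in> W"
    using rhoInf_ub_pos_mem[OF m1 near(1)] by (simp add: algebra_simps)
  show "ub N (-m) \<in> W"
    by (rule lincomb4_cancel[OF comb])
      (use \<open>sc' q k (-(m + 1)) = 0\<close> near high[of "-m - 2"] bet_nonzero_odd[of "m + 1"]
        m_ge_1 N_eq in auto)
qed

lemma eq_Vsp:
  assumes "W \<noteq> {\<lambda>_. 0}"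
  shows "W = Vsp N"
proof -
  obtain t where t: "t \<in> {-N..0}" "ub N t \<in> W"
    using ex_ub_mem_nonpos[OF inj_on_lam_pos inj_on_lam_nonpos assms] by blast
  have "(\<forall>s\<in>{-m..0}. ub N s \<in> W) \<and> (\<forall>s\<in>{-N..-m-1}. ub N s \<in> W)"
  proof (cases "-m \<le> t")
    case True
    hence "t \<in> {-m..0}" using t(1) by simp
    hence "\<forall>s\<in>{-m..0}. ub N s \<in> W" using low_block_mem t(2) by blast
    moreover have "ub N (-m-1) \<in> W" using mem_of_low_block(2) calculation by blast
    ultimately show ?thesis using high_block_mem[of "-m-1"] N_eq m_ge_1 by auto
  next
    case False
    hence "t \<in> {-N..-m-1}" using t(1) by simp
    hence "\<forall>s\<in>{-N..-m-1}. ub N s \<in> W" using high_block_mem t(2) by blast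
    moreover have "ub N (-m) \<in> W" using mem_of_high_block(2) calculation by blast
    ultimately show ?thesis using low_block_mem[of "-m"] m_ge_1 by auto
  qed
  hence low: "\<And>s. s \<in> {-m..0} \<Longrightarrow> ub N s \<in> W" and high: "\<And>s. s \<in> {-N..-m-1} \<Longrightarrow> ub N s \<in> W"
    by blast+
  show ?thesis
  proof (rule eq_Vsp_if_ub_mem)
    fix i assume "-N \<le> i" "i \<le> N - 1"
    thus "ub N i \<in> W"
      using low high mem_of_low_block(1)[OF low] mem_of_high_block(1)[OF high]
      by (cases "i \<le> -m-1"; cases "i \<le> 0"; cases "i \<le> m") auto
  qed
qed

end

lemma (in irreducible_setting) not_reducible_rep: "\<not> reducible_rep q k N"
proof
  assume "reducible_rep q k N"
  then obtain W where W: "invariant_subspace q k N W" "W \<noteq> {\<lambda>_. 0}" "W \<noteq> Vsp N"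
    unfolding reducible_rep_iff_invariant_subspace by blast
  interpret irreducible_invariant q N k m W by intro_locales (fact W(1))
  show False using eq_Vsp W(2,3) by blast
qed

lemma (in even_order_root) reducible_rep_iff_not_dvd: "reducible_rep q k N \<longleftrightarrow> \<not> N dvd (2*k + 1)"
proof
  assume "reducible_rep q k N"
  show "\<not> N dvd (2*k + 1)"
  proof
    assume dvd: "N dvd (2*k + 1)"
    have "odd N"
    proof
      assume "even N"
      hence "even (2*k + 1)" using dvd dvd_trans by blast
      thus False by simp
    qed
    define m where "m = N div 2"
    have N_eq: "N = 2*m + 1" using \<open>odd N\<close> by (simp add: m_def)
    have "N dvd 2*(k - m)" using dvd_diff[OF dvd dvd_refl] by (simp add: N_eq algebra_simps)
    hence "N dvd (k - m)" using coprime_dvd_mult_right_iff[of N 2 "k - m"] \<open>odd N\<close> by simp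
    interpret irreducible_setting q N k m by unfold_locales (fact N_eq, fact \<open>N dvd (k - m)\<close>)
    show False using not_reducible_rep \<open>reducible_rep q k N\<close> by blast
  qed
qed (rule reducible_if_not_dvd)

lemma even_order_root_ordq2:
  assumes "\<exists>m::nat. m > 0 \<and> q ^ m = 1" and "even (ordq2 q)" and "q ^ 4 \<noteq> 1"
  shows "even_order_root q (int (ordq2 q div 2))"
proof
  obtain m :: nat where m: "m > 0" "q ^ m = 1" using assms(1) by blast
  show "q \<noteq> 0" using m by (auto simp: power_0_left)
  have "(q^2) ^ m = (q ^ m)^2" by (simp flip: power_mult add: mult.commute)
  hence "(q^2) ^ m = 1" using m by simp
  hence order: "ordq2 q > 0" "(q^2) ^ ordq2 q = 1"
    using LeastI[of "\<lambda>n. n > 0 \<and> (q^2)^n = 1" m] m unfolding ordq2_def by blast+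
  have minimal: "ordq2 q \<le> n" if "0 < n" "(q^2) ^ n = 1" for n
    using that unfolding ordq2_def by (intro Least_le) simp
  have "int (ordq2 q) = 2 * int (ordq2 q div 2)" using assms(2) by (auto elim!: evenE)
  moreover have "qp q (2*a) = (q^2) powi a" for a by (simp add: qp_def power_int_mult)
  ultimately show "qp q (2*a) = 1 \<longleftrightarrow> 2 * int (ordq2 q div 2) dvd a" for a
    using power_int_eq_1_iff_dvd[OF order minimal] by metis
  have "ordq2 q \<noteq> 2" using order(2) assms(3) by (auto simp flip: power_mult)
  thus "int (ordq2 q div 2) \<ge> 2" using order(1) assms(2) by (auto elim!: evenE)
qed

theorem mainTheorem14:
  fixes q :: complex and k :: int
  assumes "\<exists>m::nat. m > 0 \<and> q ^ m = 1"
    and "even (ordq2 q)"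
    and "q ^ 4 \<noteq> 1"
  shows "reducible_rep q k (int (ordq2 q div 2)) \<longleftrightarrow>
         - qp q (4*k + 2) - qp q (-4*k - 2) \<noteq> 2"
proof -
  interpret even_order_root q "int (ordq2 q div 2)"
    using even_order_root_ordq2[OF assms] .
  show ?thesis using reducible_rep_iff_not_dvd w_eq_2_iff by simp
qed

end
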